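(* Let $A^T\in\mathbb{R}^{n_o\times n}$, $G\in\mathbb{R}^{n\times n_h}$, $B^T\in\mathbb{R}^{n\times n}$ be the Toom-Cook matrices defined in the context, let $H\in F^{n_h\times n_h}$ and $X\in F^{n\times n}$ be floating point matrices, let $S=A^T(GHG^T\odot B^TXB)A$ be the exact result and $\hat S$ the floating point result computed as described in the context. Then $$|\hat S-S|\le |A^T|\big(|G|\,|H|\,|G^T|\odot|B^T|\,|X|\,|B|\big)|A|\,\big(2\alpha^{(n)}+2\beta^{(n)}+2\gamma^{(n_h)}+1\big)\varepsilon+O(\varepsilon^2)$$ entrywise, and $$\|\hat S-S\|_1\le \|A^T\|_1\|G\|_F\|H\|_F\|G^T\|_F\|B^T\|_F\|X\|_F\|B\|_F\|A\|_1\,\big(2\alpha^{(n)}+2\beta^{(n)}+2\gamma^{(n_h)}+1\big)\varepsilon+O(\varepsilon^2).$$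
   Context: Toom-Cook matrices: $n=n_o+n_h-1$, $p_1,\dots,p_n$ distinct reals, $N_i=1/\prod_{j\ne i}(p_i-p_j)$, $M_{i,j}$ the coefficient of $a^{j-1}$ in $\prod_{k\ne i}(a-p_k)$; $A^T_{i,j}=p_j^{i-1}$ ($i\le n_o$, $j\le n$), $G_{i,j}=p_i^{j-1}N_i$ ($i\le n$, $j\le n_h$), $B^T_{i,j}=M_{j,i}$; $A$, $G^T$, $B$ are the transposes. $\odot$ is the Hadamard product, $|\cdot|$ entrywise absolute value (matrix inequalities entrywise), $\|\cdot\|_1$ the induced matrix 1-norm (maximum absolute column sum), $\|\cdot\|_F$ the Frobenius norm. Floating point model: set $F$ of floating point numbers, unit roundoff $\varepsilon$, no overflow, $fl(y)=y(1+\delta)$, $fl(y\,\mathrm{op}\,z)=(y\,\mathrm{op}\,z)(1+\delta)$ with $|\delta|\le\varepsilon$; the matrix entries are stored rounded. Computation of $\hat S$: $U=fl(fl(G)\,H\,fl(G^T))$ and $V=fl(fl(B^T)\,X\,fl(B))$ are computed by matrix products (dot products of rows/columns), $W_{ij}=fl(U_{ij}V_{ij})$, and $\hat S=fl(fl(A^T)\,W\,fl(A))$. The same summation method is used for multiplication by a matrix and by its transpose. Constants: $\alpha^{(n)},\beta^{(n)},\gamma^{(n_h)}$ are constants such that for every row $a^T$ of $A^T$ (resp. $B^T$, resp. $G$) — equivalently every column of $A$ (resp. $B$, $G^T$) — and every floating point vector $y$ of matching length the computed dot product satisfies $|a^Ty-fl(fl(a^T)y)|\le|a^T|\,|y|\,c\,\varepsilon+O(\varepsilon^2)$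 with $c=\alpha^{(n)}$ (resp. $\beta^{(n)}$, $\gamma^{(n_h)}$). *)

theory Defs
  imports "HOL-Computational_Algebra.Polynomial"
begin

text \<open>Matrices are functions nat => nat => real with indices starting at 0;
  the dimensions are carried explicitly.  Index i of the paper corresponds to i-1 here.\<close>

definition mmul :: "nat \<Rightarrow> (nat \<Rightarrow> nat \<Rightarrow> real) \<Rightarrow> (nat \<Rightarrow> nat \<Rightarrow> real) \<Rightarrow> nat \<Rightarrow> nat \<Rightarrow> real" where
  "mmul k P Q i j = (\<Sum>l<k. P i l * Q l j)"

definition mabs :: "(nat \<Rightarrow> nat \<Rightarrow> real) \<Rightarrow> nat \<Rightarrow> nat \<Rightarrow> real" where
  "mabs P i j = \<bar>P i j\<bar>"

definition hprod :: "(nat \<Rightarrow> nat \<Rightarrow> real) \<Rightarrow> (nat \<Rightarrow> nat \<Rightarrow> real) \<Rightarrow> nat \<Rightarrow> nat \<Rightarrow> real" where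
  "hprod P Q i j = P i j * Q i j"

definition mtransp :: "(nat \<Rightarrow> nat \<Rightarrow> real) \<Rightarrow> nat \<Rightarrow> nat \<Rightarrow> real" where
  "mtransp P i j = P j i"

text \<open>Induced matrix 1-norm (maximum absolute column sum) of an m x k matrix, k >= 1.\<close>
definition norm1 :: "nat \<Rightarrow> nat \<Rightarrow> (nat \<Rightarrow> nat \<Rightarrow> real) \<Rightarrow> real" where
  "norm1 m k P = Max ((\<lambda>j. \<Sum>i<m. \<bar>P i j\<bar>) ` {..<k})"

definition frob :: "nat \<Rightarrow> nat \<Rightarrow> (nat \<Rightarrow> nat \<Rightarrow> real) \<Rightarrow> real" where
  "frob m k P = sqrt (\<Sum>i<m. \<Sum>j<k. (P i j)^2)"

definition tcN :: "nat \<Rightarrow> (nat \<Rightarrow> real) \<Rightarrow> nat \<Rightarrow> real" where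
  "tcN n p i = 1 / (\<Prod>j\<in>{..<n} - {i}. (p i - p j))"

definition tcM :: "nat \<Rightarrow> (nat \<Rightarrow> real) \<Rightarrow> nat \<Rightarrow> nat \<Rightarrow> real" where
  "tcM n p i j = coeff (\<Prod>k\<in>{..<n} - {i}. [:- p k, 1:]) j"

text \<open>A^T (n_o x n), G (n x n_h), B^T (n x n).\<close>
definition tcAT :: "(nat \<Rightarrow> real) \<Rightarrow> nat \<Rightarrow> nat \<Rightarrow> real" where
  "tcAT p i j = p j ^ i"

definition tcG :: "nat \<Rightarrow> (nat \<Rightarrow> real) \<Rightarrow> nat \<Rightarrow> nat \<Rightarrow> real" where
  "tcG n p i j = p i ^ j * tcN n p i"

definition tcBT :: "nat \<Rightarrow> (nat \<Rightarrow> real) \<Rightarrow> nat \<Rightarrow> nat \<Rightarrow> real" where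
  "tcBT n p i j = tcM n p j i"

text \<open>dot m u y : the computed (floating point) dot product of the stored vectors u and y
  of length m, with the fixed summation method.  rnd : rounding to the floating point set.
  flmul_left computes fl(fl(C) Y) (C has inner dimension m, its rows are the dot product
  coefficient vectors); flmul_right computes fl(Y fl(C)) (the columns of C are the
  coefficient vectors; the same summation method is used).\<close>

definition flmul_left :: "(nat \<Rightarrow> (nat \<Rightarrow> real) \<Rightarrow> (nat \<Rightarrow> real) \<Rightarrow> real) \<Rightarrow> (real \<Rightarrow> real) \<Rightarrow> nat
    \<Rightarrow> (nat \<Rightarrow> nat \<Rightarrow> real) \<Rightarrow> (nat \<Rightarrow> nat \<Rightarrow> real) \<Rightarrow> nat \<Rightarrow> nat \<Rightarrow> real" where
  "flmul_left dot rnd m C Y i j = dot m (\<lambda>k. rnd (C i k)) (\<lambda>k. Y k j)"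

definition flmul_right :: "(nat \<Rightarrow> (nat \<Rightarrow> real) \<Rightarrow> (nat \<Rightarrow> real) \<Rightarrow> real) \<Rightarrow> (real \<Rightarrow> real) \<Rightarrow> nat
    \<Rightarrow> (nat \<Rightarrow> nat \<Rightarrow> real) \<Rightarrow> (nat \<Rightarrow> nat \<Rightarrow> real) \<Rightarrow> nat \<Rightarrow> nat \<Rightarrow> real" where
  "flmul_right dot rnd m Y C i j = dot m (\<lambda>k. rnd (C k j)) (\<lambda>k. Y i k)"

definition tc_exact :: "nat \<Rightarrow> nat \<Rightarrow> (nat \<Rightarrow> real) \<Rightarrow> (nat \<Rightarrow> nat \<Rightarrow> real) \<Rightarrow> (nat \<Rightarrow> nat \<Rightarrow> real)
    \<Rightarrow> nat \<Rightarrow> nat \<Rightarrow> real" where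
  "tc_exact no nh p H X =
    (let n = no + nh - 1; AT = tcAT p; G = tcG n p; BT = tcBT n p in
     mmul n (mmul n AT (hprod (mmul nh (mmul nh G H) (mtransp G)) (mmul n (mmul n BT X) (mtransp BT))))
       (mtransp AT))"

definition tc_computed :: "(nat \<Rightarrow> (nat \<Rightarrow> real) \<Rightarrow> (nat \<Rightarrow> real) \<Rightarrow> real) \<Rightarrow> (real \<Rightarrow> real)
    \<Rightarrow> nat \<Rightarrow> nat \<Rightarrow> (nat \<Rightarrow> real) \<Rightarrow> (nat \<Rightarrow> nat \<Rightarrow> real) \<Rightarrow> (nat \<Rightarrow> nat \<Rightarrow> real) \<Rightarrow> nat \<Rightarrow> nat \<Rightarrow> real" where
  "tc_computed dot rnd no nh p H X =
    (let n = no + nh - 1; AT = tcAT p; G = tcG n p; BT = tcBT n p;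
         U = flmul_right dot rnd nh (flmul_left dot rnd nh G H) (mtransp G);
         V = flmul_right dot rnd n (flmul_left dot rnd n BT X) (mtransp BT);
         W = (\<lambda>i j. rnd (U i j * V i j))
     in flmul_right dot rnd n (flmul_left dot rnd n AT W) (mtransp AT))"

end

theory Submission
  imports Defs "HOL-Analysis.Analysis"
begin

text \<open>Every stage of the computation is a matrix product evaluated by dot products, and
  rounding errors propagate to first order: a computed dot product with coefficient row a
  applied to an input with entrywise errors d_k has error at most \<Sum>|a_k| (c |y_k| + d_k)
  up to O(\<epsilon>^2), and a rounded scalar product u v adds |u v| \<epsilon>. Carrying along, for every
  intermediate matrix, the entrywise majorant obtained by replacing all factors by their absolute
  values, the two-sided products G H G^T and B^T X B contribute 2\<gamma> and 2\<beta>, the Hadamard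
  product 1 and the outer product A^T W A another 2\<alpha>. The norm bound then follows from
  submultiplicativity of the 1-norm and the Frobenius norm together with the Cauchy-Schwarz
  estimate for the 1-norm of a Hadamard product.\<close>

section \<open>First-order error bounds\<close>

definition first_order_bound :: "real set \<Rightarrow> (real \<Rightarrow> real) \<Rightarrow> real \<Rightarrow> bool" where
  "first_order_bound E f c \<longleftrightarrow> (\<exists>K e0. 0 < e0 \<and> (\<forall>e\<in>E. e \<le> e0 \<longrightarrow> f e \<le> c * e + K * e\<^sup>2))"

lemma first_order_boundI:
  assumes "0 < e0" "\<And>e. e \<in> E \<Longrightarrow> e \<le> e0 \<Longrightarrow> f e \<le> c * e + K * e\<^sup>2"
  shows "first_order_bound E f c"
  unfolding first_order_bound_def using assms by blast

lemma first_order_bound_zero: "first_order_bound E (\<lambda>e. 0) 0"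
  by (rule first_order_boundI[of 1 _ _ _ 0]) auto

lemma first_order_bound_quadratic: "first_order_bound E (\<lambda>e. c * e + K * e\<^sup>2) c"
  by (rule first_order_boundI[of 1 _ _ _ K]) auto

lemma first_order_bound_add:
  assumes "first_order_bound E f c" "first_order_bound E g d"
  shows "first_order_bound E (\<lambda>e. f e + g e) (c + d)"
proof -
  obtain K1 a where 1: "0 < a" "\<forall>e\<in>E. e \<le> a \<longrightarrow> f e \<le> c * e + K1 * e\<^sup>2"
    using assms(1) first_order_bound_def by auto
  obtain K2 b where 2: "0 < b" "\<forall>e\<in>E. e \<le> b \<longrightarrow> g e \<le> d * e + K2 * e\<^sup>2"
    using assms(2) first_order_bound_def by auto
  show ?thesis
  proof (rule first_order_boundI[of "min a b" _ _ _ "K1 + K2"])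
    fix e assume "e \<in> E" "e \<le> min a b"
    then have "f e + g e \<le> (c * e + K1 * e\<^sup>2) + (d * e + K2 * e\<^sup>2)" using 1 2 by (intro add_mono) auto
    then show "f e + g e \<le> (c + d) * e + (K1 + K2) * e\<^sup>2" by (simp add: algebra_simps)
  qed (use 1 2 in auto)
qed

lemma first_order_bound_sum:
  fixes m :: nat
  assumes "\<And>k. k < m \<Longrightarrow> first_order_bound E (f k) (c k)"
  shows "first_order_bound E (\<lambda>e. \<Sum>k<m. f k e) (\<Sum>k<m. c k)"
  using assms
proof (induction m)
  case 0
  then show ?case using first_order_bound_zero by simp
next
  case (Suc m)
  have "first_order_bound E (\<lambda>e. (\<Sum>k<m. f k e) + f m e) ((\<Sum>k<m. c k) + c m)"
    by (rule first_order_bound_add) (use Suc in auto)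
  then show ?case by simp
qed

lemma first_order_bound_cmult:
  assumes "0 \<le> a" "first_order_bound E f c"
  shows "first_order_bound E (\<lambda>e. a * f e) (a * c)"
proof -
  obtain K b where K: "0 < b" "\<forall>e\<in>E. e \<le> b \<longrightarrow> f e \<le> c * e + K * e\<^sup>2"
    using assms(2) first_order_bound_def by auto
  show ?thesis
  proof (rule first_order_boundI[of b _ _ _ "a * K"])
    fix e assume "e \<in> E" "e \<le> b"
    then have "a * f e \<le> a * (c * e + K * e\<^sup>2)" using K assms(1) mult_left_mono by blast
    then show "a * f e \<le> a * c * e + a * K * e\<^sup>2" by (simp add: algebra_simps)
  qed (use K in auto)
qed

lemma first_order_bound_mono:
  assumes "0 < e1" "\<forall>e\<in>E. e \<le> e1 \<longrightarrow> f e \<le> g e" "first_order_bound E g c"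
  shows "first_order_bound E f c"
proof -
  obtain K e0 where "0 < e0" "\<forall>e\<in>E. e \<le> e0 \<longrightarrow> g e \<le> c * e + K * e\<^sup>2"
    using assms(3) first_order_bound_def by auto
  then show ?thesis
    using assms(1,2) by (intro first_order_boundI[of "min e0 e1" _ _ _ K]) force+
qed

lemma first_order_bound_weaken:
  assumes "\<forall>e\<in>E. 0 < e" "c \<le> c'" "first_order_bound E f c"
  shows "first_order_bound E f c'"
proof -
  obtain K b where K: "0 < b" "\<forall>e\<in>E. e \<le> b \<longrightarrow> f e \<le> c * e + K * e\<^sup>2"
    using assms(3) first_order_bound_def by auto
  show ?thesis
  proof (rule first_order_boundI[of b _ _ _ K])
    fix e assume e: "e \<in> E" "e \<le> b"
    have "c * e \<le> c' * e" using assms(1,2) e by (simp add: mult_right_mono)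
    then show "f e \<le> c' * e + K * e\<^sup>2" using K e by force
  qed (use K in auto)
qed

lemma first_order_bound_imp_linear:
  assumes "\<forall>e\<in>E. 0 < e" "first_order_bound E f c"
  obtains K b where "0 < b" "0 \<le> K" "\<forall>e\<in>E. e \<le> b \<longrightarrow> f e \<le> K * e"
proof -
  obtain K1 b where K1: "0 < b" "\<forall>e\<in>E. e \<le> b \<longrightarrow> f e \<le> c * e + K1 * e\<^sup>2"
    using assms(2) first_order_bound_def by auto
  have "f e \<le> (\<bar>c\<bar> + \<bar>K1\<bar>) * e" if e: "e \<in> E" "e \<le> min b 1" for e
  proof -
    have ep: "0 < e" using assms(1) e by auto
    have "c * e \<le> \<bar>c\<bar> * e" using ep by (simp add: mult_right_mono)
    moreover have "K1 * e\<^sup>2 \<le> \<bar>K1\<bar> * e"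
    proof -
      have "K1 * e\<^sup>2 \<le> \<bar>K1\<bar> * e\<^sup>2" by (simp add: mult_right_mono)
      also have "\<dots> \<le> \<bar>K1\<bar> * e"
        using ep e by (simp add: mult_left_mono power2_eq_square mult_le_cancel_right1)
      finally show ?thesis .
    qed
    ultimately show ?thesis using K1 e by (auto simp: algebra_simps)
  qed
  then show thesis using K1 by (intro that[of "min b 1" "\<bar>c\<bar> + \<bar>K1\<bar>"]) auto
qed

lemma first_order_bound_mult:
  assumes "\<forall>e\<in>E. 0 < e" "first_order_bound E f c" "first_order_bound E g d"
    and "\<forall>e\<in>E. 0 \<le> f e"
  shows "first_order_bound E (\<lambda>e. f e * g e) 0"
proof -
  obtain Kf a where f: "0 < a" "0 \<le> Kf" "\<forall>e\<in>E. e \<le> a \<longrightarrow> f e \<le> Kf * e"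
    by (rule first_order_bound_imp_linear[OF assms(1,2)])
  obtain Kg b where g: "0 < b" "0 \<le> Kg" "\<forall>e\<in>E. e \<le> b \<longrightarrow> g e \<le> Kg * e"
    by (rule first_order_bound_imp_linear[OF assms(1,3)])
  show ?thesis
  proof (rule first_order_boundI[of "min a b" _ _ _ "Kf * Kg"])
    fix e assume e: "e \<in> E" "e \<le> min a b"
    have fe: "0 \<le> f e" "f e \<le> Kf * e" and ge: "g e \<le> Kg * e" and "0 < e"
      using f g e assms(1,4) by auto
    have "f e * g e \<le> f e * (Kg * e)" by (rule mult_left_mono[OF ge fe(1)])
    also have "\<dots> \<le> (Kf * e) * (Kg * e)"
      using fe g(2) \<open>0 < e\<close> by (intro mult_right_mono) auto
    finally have "f e * g e \<le> (Kf * e) * (Kg * e)" .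
    then show "f e * g e \<le> 0 * e + Kf * Kg * e\<^sup>2" by (simp add: algebra_simps power2_eq_square)
  qed (use f g in auto)
qed

lemma first_order_bound_eps_mult:
  assumes "\<forall>e\<in>E. 0 < e" "first_order_bound E f c"
  shows "first_order_bound E (\<lambda>e. e * f e) 0"
  using first_order_bound_mult[OF assms(1) first_order_bound_quadratic[of E 1 0] assms(2)] assms(1)
  by (simp add: less_imp_le)

lemma first_order_bound_finite:
  assumes "finite I" "\<forall>x\<in>I. first_order_bound E (f x) (c x)"
  shows "\<exists>K e0. 0 < e0 \<and> (\<forall>e\<in>E. e \<le> e0 \<longrightarrow> (\<forall>x\<in>I. f x e \<le> c x * e + K * e\<^sup>2))"
  using assms
proof (induction I rule: finite_induct)
  case empty
  then show ?case by (auto intro: exI[of _ 1])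
next
  case (insert x F)
  obtain K1 a where 1: "0 < a" "\<forall>e\<in>E. e \<le> a \<longrightarrow> (\<forall>x\<in>F. f x e \<le> c x * e + K1 * e\<^sup>2)"
    using insert by auto
  obtain K2 b where 2: "0 < b" "\<forall>e\<in>E. e \<le> b \<longrightarrow> f x e \<le> c x * e + K2 * e\<^sup>2"
    using insert.prems unfolding first_order_bound_def by auto
  show ?case
  proof (rule exI[of _ "max K1 K2"], rule exI[of _ "min a b"], intro conjI ballI impI)
    show "0 < min a b" using 1 2 by auto
  next
    fix e y assume e: "e \<in> E" "e \<le> min a b" and y: "y \<in> insert x F"
    have "K1 * e\<^sup>2 \<le> max K1 K2 * e\<^sup>2" "K2 * e\<^sup>2 \<le> max K1 K2 * e\<^sup>2"
      by (auto intro: mult_right_mono)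
    then show "f y e \<le> c y * e + max K1 K2 * e\<^sup>2" using 1 2 e y by force
  qed
qed

lemma first_order_bound_entrywise:
  fixes m k :: nat
  assumes "\<forall>i<m. \<forall>j<k. first_order_bound E (f i j) (c i j)"
  shows "\<exists>K e0. 0 < e0 \<and> (\<forall>e\<in>E. e \<le> e0 \<longrightarrow> (\<forall>i<m. \<forall>j<k. f i j e \<le> c i j * e + K * e\<^sup>2))"
proof -
  have "\<forall>x\<in>{..<m} \<times> {..<k}. first_order_bound E (f (fst x) (snd x)) (c (fst x) (snd x))"
    using assms by auto
  then obtain K e0 where "0 < e0"
    "\<forall>e\<in>E. e \<le> e0 \<longrightarrow> (\<forall>x\<in>{..<m} \<times> {..<k}. f (fst x) (snd x) e \<le> c (fst x) (snd x) * e + K * e\<^sup>2)"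
    using first_order_bound_finite[where f="\<lambda>x. f (fst x) (snd x)" and c="\<lambda>x. c (fst x) (snd x)",
        OF finite_cartesian_product[OF finite_lessThan finite_lessThan]] by blast
  then show ?thesis by (intro exI[of _ K] exI[of _ e0]) auto
qed

section \<open>Single rounded operations\<close>

text \<open>The defining property of the constants \<alpha>^(n), \<beta>^(n), \<gamma>^(n_h), for one coefficient row a.\<close>
definition accurate_dot :: "real set \<Rightarrow> (real \<Rightarrow> real set) \<Rightarrow> (real \<Rightarrow> real \<Rightarrow> real)
    \<Rightarrow> (real \<Rightarrow> nat \<Rightarrow> (nat \<Rightarrow> real) \<Rightarrow> (nat \<Rightarrow> real) \<Rightarrow> real) \<Rightarrow> nat \<Rightarrow> (nat \<Rightarrow> real) \<Rightarrow> real \<Rightarrow> bool"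
  where
  "accurate_dot E Fl fl dot m a c \<longleftrightarrow> (\<exists>K e0. 0 < e0 \<and> (\<forall>e\<in>E. e \<le> e0 \<longrightarrow>
      (\<forall>y. (\<forall>k<m. y k \<in> Fl e) \<longrightarrow>
        \<bar>(\<Sum>k<m. a k * y k) - dot e m (\<lambda>k. fl e (a k)) y\<bar>
          \<le> (\<Sum>k<m. \<bar>a k\<bar> * \<bar>y k\<bar>) * (c * e + K * e\<^sup>2))))"

lemma accurate_dot_rows:
  assumes "\<exists>K e0. 0 < e0 \<and> (\<forall>e\<in>E. e \<le> e0 \<longrightarrow>
      (\<forall>i<r. \<forall>y. (\<forall>k<m. y k \<in> Fl e) \<longrightarrow>
        \<bar>(\<Sum>k<m. C i k * y k) - dot e m (\<lambda>k. fl e (C i k)) y\<bar>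
          \<le> (\<Sum>k<m. \<bar>C i k\<bar> * \<bar>y k\<bar>) * (c * e + K * e\<^sup>2)))"
  shows "\<forall>i<r. accurate_dot E Fl fl dot m (C i) c"
  using assms unfolding accurate_dot_def by blast

text \<open>Feeding the rounded all-ones vector into the defining bound shows
  c \<epsilon> + K \<epsilon>^2 \<ge> 0 for arbitrarily small \<epsilon> \<in> E.\<close>
lemma accurate_dot_nonneg:
  assumes small: "\<forall>d>0. \<exists>e\<in>E. e \<le> d" and pos: "\<forall>e\<in>E. 0 < e"
    and fl_one: "\<forall>e\<in>E. \<bar>fl e 1 - 1\<bar> \<le> e \<and> fl e 1 \<in> Fl e"
    and acc: "accurate_dot E Fl fl dot m a c"
    and nonzero: "k0 < m" "a k0 \<noteq> 0"
  shows "0 \<le> c"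
proof (rule ccontr)
  assume "\<not> 0 \<le> c"
  then have c: "c < 0" by simp
  obtain K e0 where h: "0 < e0" "\<forall>e\<in>E. e \<le> e0 \<longrightarrow> (\<forall>y. (\<forall>k<m. y k \<in> Fl e) \<longrightarrow>
      \<bar>(\<Sum>k<m. a k * y k) - dot e m (\<lambda>k. fl e (a k)) y\<bar> \<le> (\<Sum>k<m. \<bar>a k\<bar> * \<bar>y k\<bar>) * (c * e + K * e\<^sup>2))"
    using acc unfolding accurate_dot_def by blast
  define d where "d = min e0 (min (1/2) (- c / (2 * \<bar>K\<bar> + 1)))"
  have "0 < - c / (2 * \<bar>K\<bar> + 1)" using c by (intro divide_pos_pos) auto
  then have "0 < d" using h c by (auto simp: d_def)
  then obtain e where e: "e \<in> E" "e \<le> d" using small by auto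
  have ep: "0 < e" using pos e by auto
  have "fl e 1 \<ge> 1/2" using fl_one e by (auto simp: d_def abs_le_iff)
  then have "0 < \<bar>a k0\<bar> * \<bar>fl e 1\<bar>" using nonzero by auto
  also have "\<dots> \<le> (\<Sum>k<m. \<bar>a k\<bar> * \<bar>fl e 1\<bar>)"
    by (rule member_le_sum[where f="\<lambda>k. \<bar>a k\<bar> * \<bar>fl e 1\<bar>"]) (use nonzero in auto)
  finally have S0: "0 < (\<Sum>k<m. \<bar>a k\<bar> * \<bar>fl e 1\<bar>)" .
  have "e \<le> e0" using e by (simp add: d_def)
  then have "0 \<le> (\<Sum>k<m. \<bar>a k\<bar> * \<bar>fl e 1\<bar>) * (c * e + K * e\<^sup>2)"
    using h(2) e(1) fl_one by (auto dest!: bspec[of _ _ e] spec[of _ "\<lambda>k. fl e 1"] intro: order_trans[OF abs_ge_zero])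
  then have "0 \<le> c * e + K * e\<^sup>2" using S0 by (simp add: zero_le_mult_iff)
  then have "0 \<le> (c + K * e) * e" by (simp add: algebra_simps power2_eq_square)
  then have "0 \<le> c + K * e" using ep by (simp add: zero_le_mult_iff)
  moreover have "K * e < - c"
  proof -
    have "K * e \<le> \<bar>K\<bar> * (- c / (2 * \<bar>K\<bar> + 1))"
      using e ep by (intro order_trans[OF mult_right_mono[of K "\<bar>K\<bar>" e]] mult_left_mono)
        (auto simp: d_def)
    also have "\<dots> = (- c) * (\<bar>K\<bar> / (2 * \<bar>K\<bar> + 1))" by simp
    also have "\<dots> < (- c) * 1" using c by (intro mult_strict_left_mono) auto
    finally show ?thesis by simp
  qed
  ultimately show False by linarith
qed

text \<open>The error of the input enters only at second order.\<close>
lemma accurate_dot_perturbed_input: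
  assumes pos: "\<forall>e\<in>E. 0 < e"
    and acc: "accurate_dot E Fl fl dot m a c" and c0: "0 \<le> c"
    and y_float: "\<forall>e\<in>E. \<forall>k<m. y e k \<in> Fl e"
    and y_err: "first_order_bound E (\<lambda>e. \<Sum>k<m. \<bar>a k\<bar> * \<bar>y e k - ys k\<bar>) d"
  shows "first_order_bound E (\<lambda>e. \<bar>(\<Sum>k<m. a k * y e k) - dot e m (\<lambda>k. fl e (a k)) (y e)\<bar>)
           (c * (\<Sum>k<m. \<bar>a k\<bar> * \<bar>ys k\<bar>))"
proof -
  define s where "s e = (\<Sum>k<m. \<bar>a k\<bar> * \<bar>y e k - ys k\<bar>)" for e
  define A where "A = (\<Sum>k<m. \<bar>a k\<bar> * \<bar>ys k\<bar>)"
  obtain K e0 where K: "0 < e0" "\<forall>e\<in>E. e \<le> e0 \<longrightarrow> (\<forall>y. (\<forall>k<m. y k \<in> Fl e) \<longrightarrow>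
      \<bar>(\<Sum>k<m. a k * y k) - dot e m (\<lambda>k. fl e (a k)) y\<bar> \<le> (\<Sum>k<m. \<bar>a k\<bar> * \<bar>y k\<bar>) * (c * e + K * e\<^sup>2))"
    using acc unfolding accurate_dot_def by blast
  have sum_le: "(\<Sum>k<m. \<bar>a k\<bar> * \<bar>y e k\<bar>) \<le> A + s e" for e
  proof -
    have "(\<Sum>k<m. \<bar>a k\<bar> * \<bar>y e k\<bar>) \<le> (\<Sum>k<m. \<bar>a k\<bar> * \<bar>ys k\<bar> + \<bar>a k\<bar> * \<bar>y e k - ys k\<bar>)"
      by (rule sum_mono) (simp add: distrib_left[symmetric] mult_left_mono)
    then show ?thesis by (simp add: A_def s_def sum.distrib)
  qed
  have "\<forall>e\<in>E. e \<le> e0 \<longrightarrow> \<bar>(\<Sum>k<m. a k * y e k) - dot e m (\<lambda>k. fl e (a k)) (y e)\<bar>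
      \<le> A * c * e + A * \<bar>K\<bar> * e\<^sup>2 + s e * (c * e + \<bar>K\<bar> * e\<^sup>2)"
  proof (intro ballI impI)
    fix e assume e: "e \<in> E" "e \<le> e0"
    have ep: "0 < e" using pos e by auto
    have "\<bar>(\<Sum>k<m. a k * y e k) - dot e m (\<lambda>k. fl e (a k)) (y e)\<bar>
        \<le> (\<Sum>k<m. \<bar>a k\<bar> * \<bar>y e k\<bar>) * (c * e + K * e\<^sup>2)"
      using K(2) e y_float by simp
    also have "\<dots> \<le> (\<Sum>k<m. \<bar>a k\<bar> * \<bar>y e k\<bar>) * (c * e + \<bar>K\<bar> * e\<^sup>2)"
      by (intro mult_left_mono sum_nonneg) (auto intro: mult_right_mono)
    also have "\<dots> \<le> (A + s e) * (c * e + \<bar>K\<bar> * e\<^sup>2)"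
      using c0 ep by (intro mult_right_mono sum_le) auto
    finally show "\<bar>(\<Sum>k<m. a k * y e k) - dot e m (\<lambda>k. fl e (a k)) (y e)\<bar>
        \<le> A * c * e + A * \<bar>K\<bar> * e\<^sup>2 + s e * (c * e + \<bar>K\<bar> * e\<^sup>2)"
      by (simp add: algebra_simps)
  qed
  moreover have "first_order_bound E (\<lambda>e. A * c * e + A * \<bar>K\<bar> * e\<^sup>2 + s e * (c * e + \<bar>K\<bar> * e\<^sup>2))
      (A * c + 0)"
  proof (intro first_order_bound_add)
    show "first_order_bound E (\<lambda>e. A * c * e + A * \<bar>K\<bar> * e\<^sup>2) (A * c)"
      by (rule first_order_bound_quadratic)
    show "first_order_bound E (\<lambda>e. s e * (c * e + \<bar>K\<bar> * e\<^sup>2)) 0"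
      by (rule first_order_bound_mult[OF pos y_err[folded s_def] first_order_bound_quadratic])
        (auto simp: s_def intro: sum_nonneg)
  qed
  ultimately show ?thesis
    unfolding A_def by (simp add: mult.commute first_order_bound_mono[OF K(1)])
qed

lemma accurate_dot_error:
  assumes pos: "\<forall>e\<in>E. 0 < e"
    and acc: "accurate_dot E Fl fl dot m a c" and c0: "0 \<le> c"
    and y_float: "\<forall>e\<in>E. \<forall>k<m. y e k \<in> Fl e"
    and y_err: "\<And>k. k < m \<Longrightarrow> first_order_bound E (\<lambda>e. \<bar>y e k - ys k\<bar>) (d k)"
  shows "first_order_bound E (\<lambda>e. \<bar>dot e m (\<lambda>k. fl e (a k)) (y e) - (\<Sum>k<m. a k * ys k)\<bar>)
           (\<Sum>k<m. \<bar>a k\<bar> * (c * \<bar>ys k\<bar> + d k))"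
proof -
  have propagated: "first_order_bound E (\<lambda>e. \<Sum>k<m. \<bar>a k\<bar> * \<bar>y e k - ys k\<bar>) (\<Sum>k<m. \<bar>a k\<bar> * d k)"
    by (intro first_order_bound_sum first_order_bound_cmult y_err) auto
  have "\<bar>dot e m (\<lambda>k. fl e (a k)) (y e) - (\<Sum>k<m. a k * ys k)\<bar>
      \<le> \<bar>(\<Sum>k<m. a k * y e k) - dot e m (\<lambda>k. fl e (a k)) (y e)\<bar> + (\<Sum>k<m. \<bar>a k\<bar> * \<bar>y e k - ys k\<bar>)" for e
  proof -
    have "\<bar>(\<Sum>k<m. a k * y e k) - (\<Sum>k<m. a k * ys k)\<bar> \<le> (\<Sum>k<m. \<bar>a k * (y e k - ys k)\<bar>)"
      by (simp add: sum_subtractf[symmetric] right_diff_distrib sum_abs)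
    then show ?thesis by (simp add: abs_mult)
  qed
  then have "first_order_bound E (\<lambda>e. \<bar>dot e m (\<lambda>k. fl e (a k)) (y e) - (\<Sum>k<m. a k * ys k)\<bar>)
      (c * (\<Sum>k<m. \<bar>a k\<bar> * \<bar>ys k\<bar>) + (\<Sum>k<m. \<bar>a k\<bar> * d k))"
    by (intro first_order_bound_mono[OF zero_less_one _ first_order_bound_add
          [OF accurate_dot_perturbed_input[OF pos acc c0 y_float propagated] propagated]]) auto
  moreover have "c * (\<Sum>k<m. \<bar>a k\<bar> * \<bar>ys k\<bar>) + (\<Sum>k<m. \<bar>a k\<bar> * d k) = (\<Sum>k<m. \<bar>a k\<bar> * (c * \<bar>ys k\<bar> + d k))"
    by (simp add: sum_distrib_left sum.distrib algebra_simps)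
  ultimately show ?thesis by simp
qed

lemma rounded_mult_error:
  assumes pos: "\<forall>e\<in>E. 0 < e" and fl_rel: "\<forall>e\<in>E. \<forall>z. \<bar>fl e z - z\<bar> \<le> e * \<bar>z\<bar>"
    and u: "first_order_bound E (\<lambda>e. \<bar>u e - us\<bar>) cu"
    and v: "first_order_bound E (\<lambda>e. \<bar>v e - vs\<bar>) cv"
  shows "first_order_bound E (\<lambda>e. \<bar>fl e (u e * v e) - us * vs\<bar>) (\<bar>us * vs\<bar> + \<bar>us\<bar> * cv + \<bar>vs\<bar> * cu)"
proof -
  define X where "X e = \<bar>us\<bar> * \<bar>v e - vs\<bar> + \<bar>vs\<bar> * \<bar>u e - us\<bar> + \<bar>u e - us\<bar> * \<bar>v e - vs\<bar>" for e
  have X: "first_order_bound E X (\<bar>us\<bar> * cv + \<bar>vs\<bar> * cu + 0)"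
    unfolding X_def
    by (intro first_order_bound_add first_order_bound_cmult u v first_order_bound_mult[OF pos u v]) auto
  have exact: "\<bar>u e * v e - us * vs\<bar> \<le> X e" for e
  proof -
    have "u e * v e - us * vs = us * (v e - vs) + vs * (u e - us) + (u e - us) * (v e - vs)"
      by (simp add: algebra_simps)
    also have "\<bar>\<dots>\<bar> \<le> X e" unfolding X_def abs_mult[symmetric] by linarith
    finally show ?thesis .
  qed
  have "\<forall>e\<in>E. e \<le> 1 \<longrightarrow> \<bar>fl e (u e * v e) - us * vs\<bar> \<le> \<bar>us * vs\<bar> * e + X e + e * X e"
  proof (intro ballI impI)
    fix e assume e: "e \<in> E"
    have "\<bar>fl e (u e * v e) - us * vs\<bar> \<le> \<bar>fl e (u e * v e) - u e * v e\<bar> + \<bar>u e * v e - us * vs\<bar>"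
      by linarith
    also have "\<dots> \<le> e * \<bar>u e * v e\<bar> + X e" using fl_rel e exact by (intro add_mono) auto
    also have "e * \<bar>u e * v e\<bar> \<le> e * (\<bar>us * vs\<bar> + X e)"
      using exact[of e] pos e by (intro mult_left_mono) auto
    finally show "\<bar>fl e (u e * v e) - us * vs\<bar> \<le> \<bar>us * vs\<bar> * e + X e + e * X e"
      by (simp add: algebra_simps)
  qed
  moreover have "first_order_bound E (\<lambda>e. \<bar>us * vs\<bar> * e + X e + e * X e)
      (\<bar>us * vs\<bar> + (\<bar>us\<bar> * cv + \<bar>vs\<bar> * cu + 0) + 0)"
    using first_order_bound_quadratic[of E "\<bar>us * vs\<bar>" 0]
    by (intro first_order_bound_add X first_order_bound_eps_mult[OF pos X]) simp
  ultimately show ?thesis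
    by (simp add: add.assoc first_order_bound_mono[OF zero_less_one])
qed

section \<open>Computed matrix products\<close>

lemma abs_mmul_le:
  assumes "\<forall>l<m. \<bar>X i l\<bar> \<le> X' i l" "\<forall>l<m. \<bar>Y l k\<bar> \<le> Y' l k"
  shows "\<bar>mmul m X Y i k\<bar> \<le> mmul m X' Y' i k"
proof -
  have "\<bar>mmul m X Y i k\<bar> \<le> (\<Sum>l<m. \<bar>X i l\<bar> * \<bar>Y l k\<bar>)"
    unfolding mmul_def abs_mult[symmetric] by (rule sum_abs)
  also have "\<dots> \<le> (\<Sum>l<m. X' i l * Y' l k)"
    using assms by (intro sum_mono mult_mono) (auto intro: order_trans[OF abs_ge_zero])
  finally show ?thesis by (simp add: mmul_def)
qed

lemma flmul_left_error:
  assumes pos: "\<forall>e\<in>E. 0 < e"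
    and row: "accurate_dot E Fl fl dot m (C i) c" and c0: "0 \<le> c"
    and Y_float: "\<forall>e\<in>E. \<forall>k<m. Y e k j \<in> Fl e"
    and Y_err: "\<forall>k<m. first_order_bound E (\<lambda>e. \<bar>Y e k j - Ys k j\<bar>) (d * Yb k j)"
    and Ys_le: "\<forall>k<m. \<bar>Ys k j\<bar> \<le> Yb k j"
  shows "first_order_bound E (\<lambda>e. \<bar>flmul_left (dot e) (fl e) m C (Y e) i j - mmul m C Ys i j\<bar>)
           ((c + d) * mmul m (mabs C) Yb i j)"
proof -
  have "first_order_bound E (\<lambda>e. \<bar>dot e m (\<lambda>k. fl e (C i k)) (\<lambda>k. Y e k j) - (\<Sum>k<m. C i k * Ys k j)\<bar>)
      (\<Sum>k<m. \<bar>C i k\<bar> * (c * \<bar>Ys k j\<bar> + d * Yb k j))"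
    using Y_float Y_err
    by (intro accurate_dot_error[OF pos row c0, where y="\<lambda>e k. Y e k j"]) auto
  moreover have "(\<Sum>k<m. \<bar>C i k\<bar> * (c * \<bar>Ys k j\<bar> + d * Yb k j)) \<le> (c + d) * mmul m (mabs C) Yb i j"
    unfolding mmul_def mabs_def sum_distrib_left
  proof (rule sum_mono)
    fix k assume "k \<in> {..<m}"
    then have "\<bar>C i k\<bar> * (c * \<bar>Ys k j\<bar>) \<le> \<bar>C i k\<bar> * (c * Yb k j)"
      using Ys_le c0 by (intro mult_left_mono) auto
    then show "\<bar>C i k\<bar> * (c * \<bar>Ys k j\<bar> + d * Yb k j) \<le> (c + d) * (\<bar>C i k\<bar> * Yb k j)"
      by (simp add: algebra_simps)
  qed
  ultimately show ?thesis
    using first_order_bound_weaken[OF pos] by (simp add: flmul_left_def mmul_def)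
qed

lemma flmul_right_error:
  assumes pos: "\<forall>e\<in>E. 0 < e"
    and col: "accurate_dot E Fl fl dot m (\<lambda>k. C k j) c" and c0: "0 \<le> c"
    and Y_float: "\<forall>e\<in>E. \<forall>k<m. Y e i k \<in> Fl e"
    and Y_err: "\<forall>k<m. first_order_bound E (\<lambda>e. \<bar>Y e i k - Ys i k\<bar>) (d * Yb i k)"
    and Ys_le: "\<forall>k<m. \<bar>Ys i k\<bar> \<le> Yb i k"
  shows "first_order_bound E (\<lambda>e. \<bar>flmul_right (dot e) (fl e) m (Y e) C i j - mmul m Ys C i j\<bar>)
           ((c + d) * mmul m Yb (mabs C) i j)"
proof -
  have "first_order_bound E (\<lambda>e. \<bar>flmul_left (dot e) (fl e) m (mtransp C) (\<lambda>k l. Y e l k) j i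
      - mmul m (mtransp C) (\<lambda>k l. Ys l k) j i\<bar>) ((c + d) * mmul m (mabs (mtransp C)) (\<lambda>k l. Yb l k) j i)"
    using Y_float Y_err Ys_le col by (intro flmul_left_error[OF pos _ c0]) (simp_all add: mtransp_def[abs_def])
  then show ?thesis
    by (simp add: flmul_left_def flmul_right_def mmul_def mabs_def mtransp_def mult.commute)
qed

lemma flmul_congruence_error:
  assumes pos: "\<forall>e\<in>E. 0 < e"
    and rows: "\<forall>i<r. accurate_dot E Fl fl dot m (C i) c" and c0: "0 \<le> c"
    and dot_float: "\<forall>e\<in>E. \<forall>m u y. dot e m u y \<in> Fl e"
    and Y_float: "\<forall>e\<in>E. \<forall>k<m. \<forall>l<m. Y e k l \<in> Fl e"
    and Y_err: "\<forall>k<m. \<forall>l<m. first_order_bound E (\<lambda>e. \<bar>Y e k l - Ys k l\<bar>) (d * Yb k l)"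
    and Ys_le: "\<forall>k<m. \<forall>l<m. \<bar>Ys k l\<bar> \<le> Yb k l"
    and ij: "i < r" "j < r"
  shows "first_order_bound E
    (\<lambda>e. \<bar>flmul_right (dot e) (fl e) m (flmul_left (dot e) (fl e) m C (Y e)) (mtransp C) i j
          - mmul m (mmul m C Ys) (mtransp C) i j\<bar>)
    ((2 * c + d) * mmul m (mmul m (mabs C) Yb) (mabs (mtransp C)) i j)"
proof -
  have left: "\<forall>l<m. first_order_bound E
      (\<lambda>e. \<bar>flmul_left (dot e) (fl e) m C (Y e) i l - mmul m C Ys i l\<bar>) ((c + d) * mmul m (mabs C) Yb i l)"
    using rows ij Y_float Y_err Ys_le by (auto intro!: flmul_left_error[OF pos _ c0])
  have "\<forall>l<m. \<bar>mmul m C Ys i l\<bar> \<le> mmul m (mabs C) Yb i l"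
    using Ys_le by (auto intro!: abs_mmul_le simp: mabs_def)
  moreover have "accurate_dot E Fl fl dot m (\<lambda>k. mtransp C k j) c"
    using rows ij by (simp add: mtransp_def)
  ultimately have "first_order_bound E
    (\<lambda>e. \<bar>flmul_right (dot e) (fl e) m (flmul_left (dot e) (fl e) m C (Y e)) (mtransp C) i j
          - mmul m (mmul m C Ys) (mtransp C) i j\<bar>)
    ((c + (c + d)) * mmul m (mmul m (mabs C) Yb) (mabs (mtransp C)) i j)"
    using left dot_float by (intro flmul_right_error[OF pos _ c0]) (auto simp: flmul_left_def)
  then show ?thesis by (simp add: algebra_simps)
qed

lemma hprod_rounding_error:
  assumes pos: "\<forall>e\<in>E. 0 < e" and fl_rel: "\<forall>e\<in>E. \<forall>z. \<bar>fl e z - z\<bar> \<le> e * \<bar>z\<bar>"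
    and U_err: "first_order_bound E (\<lambda>e. \<bar>U e i j - Us i j\<bar>) (cu * P i j)" and Us_le: "\<bar>Us i j\<bar> \<le> P i j"
    and V_err: "first_order_bound E (\<lambda>e. \<bar>V e i j - Vs i j\<bar>) (cv * Q i j)" and Vs_le: "\<bar>Vs i j\<bar> \<le> Q i j"
    and nonneg: "0 \<le> cu" "0 \<le> cv"
  shows "first_order_bound E (\<lambda>e. \<bar>fl e (U e i j * V e i j) - hprod Us Vs i j\<bar>)
           ((1 + cu + cv) * hprod P Q i j)"
proof -
  have "\<bar>Us i j * Vs i j\<bar> + \<bar>Us i j\<bar> * (cv * Q i j) + \<bar>Vs i j\<bar> * (cu * P i j)
      \<le> P i j * Q i j + P i j * (cv * Q i j) + Q i j * (cu * P i j)"
    using Us_le Vs_le nonneg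
    by (intro add_mono mult_right_mono) (auto simp: abs_mult intro: mult_mono order_trans[OF abs_ge_zero])
  then show ?thesis
    using first_order_bound_weaken[OF pos _ rounded_mult_error[OF pos fl_rel U_err V_err]]
    by (simp add: hprod_def algebra_simps)
qed

lemma bilinear_algorithm_error:
  fixes AT G BT H X :: "nat \<Rightarrow> nat \<Rightarrow> real"
  assumes pos: "\<forall>e\<in>E. 0 < e"
    and fl_model: "\<forall>e\<in>E. \<forall>y. \<bar>fl e y - y\<bar> \<le> e * \<bar>y\<bar> \<and> fl e y \<in> Fl e"
    and dot_float: "\<forall>e\<in>E. \<forall>m u y. dot e m u y \<in> Fl e"
    and H_float: "\<forall>e\<in>E. \<forall>i<nh. \<forall>j<nh. H i j \<in> Fl e"
    and X_float: "\<forall>e\<in>E. \<forall>i<n. \<forall>j<n. X i j \<in> Fl e"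
    and rows_A: "\<forall>i<no. accurate_dot E Fl fl dot n (AT i) alpha"
    and rows_B: "\<forall>i<n. accurate_dot E Fl fl dot n (BT i) beta"
    and rows_G: "\<forall>i<n. accurate_dot E Fl fl dot nh (G i) gamma"
    and nonneg: "0 \<le> alpha" "0 \<le> beta" "0 \<le> gamma"
    and ij: "i < no" "j < no"
  defines "U e \<equiv> flmul_right (dot e) (fl e) nh (flmul_left (dot e) (fl e) nh G H) (mtransp G)"
    and "V e \<equiv> flmul_right (dot e) (fl e) n (flmul_left (dot e) (fl e) n BT X) (mtransp BT)"
  shows "first_order_bound E
    (\<lambda>e. \<bar>flmul_right (dot e) (fl e) n
            (flmul_left (dot e) (fl e) n AT (\<lambda>k l. fl e (U e k l * V e k l))) (mtransp AT) i j
          - mmul n (mmul n AT (hprod (mmul nh (mmul nh G H) (mtransp G))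
                                     (mmul n (mmul n BT X) (mtransp BT)))) (mtransp AT) i j\<bar>)
    ((2 * alpha + 2 * beta + 2 * gamma + 1)
      * mmul n (mmul n (mabs AT) (hprod (mmul nh (mmul nh (mabs G) (mabs H)) (mabs (mtransp G)))
                                        (mmul n (mmul n (mabs BT) (mabs X)) (mabs (mtransp BT)))))
          (mabs (mtransp AT)) i j)"
proof -
  define Us where "Us = mmul nh (mmul nh G H) (mtransp G)"
  define Vs where "Vs = mmul n (mmul n BT X) (mtransp BT)"
  define P where "P = mmul nh (mmul nh (mabs G) (mabs H)) (mabs (mtransp G))"
  define Q where "Q = mmul n (mmul n (mabs BT) (mabs X)) (mabs (mtransp BT))"
  have U_err: "first_order_bound E (\<lambda>e. \<bar>U e k l - Us k l\<bar>) ((2 * gamma + 0) * P k l)"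
    if "k < n" "l < n" for k l
    unfolding U_def Us_def P_def
    by (rule flmul_congruence_error[OF pos rows_G nonneg(3) dot_float _ _ _ that, where Ys=H])
      (use H_float in \<open>simp_all add: mabs_def first_order_bound_zero\<close>)
  have V_err: "first_order_bound E (\<lambda>e. \<bar>V e k l - Vs k l\<bar>) ((2 * beta + 0) * Q k l)"
    if "k < n" "l < n" for k l
    unfolding V_def Vs_def Q_def
    by (rule flmul_congruence_error[OF pos rows_B nonneg(2) dot_float _ _ _ that, where Ys=X])
      (use X_float in \<open>simp_all add: mabs_def first_order_bound_zero\<close>)
  have Us_le: "\<bar>Us k l\<bar> \<le> P k l" for k l
    unfolding Us_def P_def by (intro abs_mmul_le allI impI) (auto simp: mabs_def intro: abs_mmul_le)
  have Vs_le: "\<bar>Vs k l\<bar> \<le> Q k l" for k l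
    unfolding Vs_def Q_def by (intro abs_mmul_le allI impI) (auto simp: mabs_def intro: abs_mmul_le)
  have "\<forall>k<n. \<forall>l<n. first_order_bound E (\<lambda>e. \<bar>fl e (U e k l * V e k l) - hprod Us Vs k l\<bar>)
      ((1 + 2 * gamma + 2 * beta) * hprod P Q k l)"
  proof (intro allI impI)
    fix k l assume "k < n" "l < n"
    then show "first_order_bound E (\<lambda>e. \<bar>fl e (U e k l * V e k l) - hprod Us Vs k l\<bar>)
        ((1 + 2 * gamma + 2 * beta) * hprod P Q k l)"
      using fl_model nonneg
      by (intro hprod_rounding_error[OF pos _ U_err[simplified] Us_le V_err[simplified] Vs_le]) auto
  qed
  moreover have "\<bar>hprod Us Vs k l\<bar> \<le> hprod P Q k l" for k l
    unfolding hprod_def abs_mult by (rule mult_mono[OF Us_le Vs_le]) (auto intro: order_trans[OF abs_ge_zero Us_le])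
  ultimately have "first_order_bound E
    (\<lambda>e. \<bar>flmul_right (dot e) (fl e) n
            (flmul_left (dot e) (fl e) n AT (\<lambda>k l. fl e (U e k l * V e k l))) (mtransp AT) i j
          - mmul n (mmul n AT (hprod Us Vs)) (mtransp AT) i j\<bar>)
    ((2 * alpha + (1 + 2 * gamma + 2 * beta)) * mmul n (mmul n (mabs AT) (hprod P Q)) (mabs (mtransp AT)) i j)"
    using fl_model ij by (intro flmul_congruence_error[OF pos rows_A nonneg(1) dot_float]) auto
  then show ?thesis by (simp add: Us_def Vs_def P_def Q_def algebra_simps)
qed

section \<open>Matrix norms\<close>

lemma mmul_nonneg:
  assumes "\<And>i j. 0 \<le> P i j" "\<And>i j. 0 \<le> Q i j"
  shows "0 \<le> mmul k P Q i j"
  unfolding mmul_def using assms by (auto intro: sum_nonneg)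

lemma col_sum_le_norm1: "j < k \<Longrightarrow> (\<Sum>i<m. \<bar>P i j\<bar>) \<le> norm1 m k P"
  unfolding norm1_def by (rule Max_ge) auto

lemma norm1_leI: "0 < k \<Longrightarrow> (\<And>j. j < k \<Longrightarrow> (\<Sum>i<m. \<bar>P i j\<bar>) \<le> B) \<Longrightarrow> norm1 m k P \<le> B"
  unfolding norm1_def by (rule Max.boundedI) auto

lemma norm1_nonneg: "0 < k \<Longrightarrow> 0 \<le> norm1 m k P"
  using col_sum_le_norm1[where j=0 and k=k and m=m and P=P] by (meson order_trans sum_nonneg abs_ge_zero)

lemma norm1_mabs [simp]: "norm1 m k (mabs P) = norm1 m k P"
  by (simp add: norm1_def mabs_def)

lemma frob_mabs [simp]: "frob m k (mabs P) = frob m k P"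
  by (simp add: frob_def mabs_def)

lemma frob_nonneg: "0 \<le> frob m k P"
  by (simp add: frob_def sum_nonneg)

lemma norm1_mmul:
  assumes "0 < k" "0 < l"
  shows "norm1 m k (mmul l X Y) \<le> norm1 m l X * norm1 l k Y"
proof (rule norm1_leI[OF assms(1)])
  fix j assume j: "j < k"
  have "(\<Sum>i<m. \<bar>mmul l X Y i j\<bar>) \<le> (\<Sum>i<m. \<Sum>t<l. \<bar>X i t\<bar> * \<bar>Y t j\<bar>)"
    unfolding mmul_def by (intro sum_mono order_trans[OF sum_abs]) (simp add: abs_mult)
  also have "\<dots> = (\<Sum>t<l. \<bar>Y t j\<bar> * (\<Sum>i<m. \<bar>X i t\<bar>))"
    by (subst sum.swap) (simp add: sum_distrib_left mult.commute)
  also have "\<dots> \<le> (\<Sum>t<l. \<bar>Y t j\<bar> * norm1 m l X)"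
    by (intro sum_mono mult_left_mono col_sum_le_norm1) auto
  also have "\<dots> = norm1 m l X * (\<Sum>t<l. \<bar>Y t j\<bar>)"
    by (simp add: sum_distrib_left mult.commute)
  also have "\<dots> \<le> norm1 m l X * norm1 l k Y"
    by (intro mult_left_mono col_sum_le_norm1 norm1_nonneg j assms)
  finally show "(\<Sum>i<m. \<bar>mmul l X Y i j\<bar>) \<le> norm1 m l X * norm1 l k Y" .
qed

lemma sum_abs_mult_le_sqrt:
  fixes a b :: "nat \<Rightarrow> real"
  shows "(\<Sum>i<m. \<bar>a i\<bar> * \<bar>b i\<bar>) \<le> sqrt (\<Sum>i<m. (a i)\<^sup>2) * sqrt (\<Sum>i<m. (b i)\<^sup>2)"
proof -
  have "(\<Sum>i<m. \<bar>a i\<bar> * \<bar>b i\<bar>)\<^sup>2 \<le> (\<Sum>i<m. \<bar>a i\<bar>\<^sup>2) * (\<Sum>i<m. \<bar>b i\<bar>\<^sup>2)"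
    by (rule Cauchy_Schwarz_ineq_sum)
  then have "(\<Sum>i<m. \<bar>a i\<bar> * \<bar>b i\<bar>) \<le> sqrt ((\<Sum>i<m. (a i)\<^sup>2) * (\<Sum>i<m. (b i)\<^sup>2))"
    by (intro real_le_rsqrt) simp
  then show ?thesis by (simp add: real_sqrt_mult)
qed

lemma norm1_hprod:
  assumes "0 < k"
  shows "norm1 m k (hprod P Q) \<le> frob m k P * frob m k Q"
proof (rule norm1_leI[OF assms])
  fix j assume j: "j < k"
  have col: "(\<Sum>i<m. (R i j)\<^sup>2) \<le> (\<Sum>i<m. \<Sum>j<k. (R i j)\<^sup>2)" for R :: "nat \<Rightarrow> nat \<Rightarrow> real"
    by (intro sum_mono member_le_sum[where f="\<lambda>j. (R _ j)\<^sup>2"]) (use j in auto)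
  have "(\<Sum>i<m. \<bar>hprod P Q i j\<bar>) = (\<Sum>i<m. \<bar>P i j\<bar> * \<bar>Q i j\<bar>)"
    by (simp add: hprod_def abs_mult)
  also have "\<dots> \<le> sqrt (\<Sum>i<m. (P i j)\<^sup>2) * sqrt (\<Sum>i<m. (Q i j)\<^sup>2)"
    by (rule sum_abs_mult_le_sqrt)
  also have "\<dots> \<le> frob m k P * frob m k Q"
    unfolding frob_def by (intro mult_mono real_sqrt_le_mono col) (auto intro!: sum_nonneg)
  finally show "(\<Sum>i<m. \<bar>hprod P Q i j\<bar>) \<le> frob m k P * frob m k Q" .
qed

lemma frob_mmul: "frob m k (mmul l X Y) \<le> frob m l X * frob l k Y"
proof -
  have "(\<Sum>i<m. \<Sum>j<k. (mmul l X Y i j)\<^sup>2) \<le> (\<Sum>i<m. \<Sum>j<k. (\<Sum>t<l. (X i t)\<^sup>2) * (\<Sum>t<l. (Y t j)\<^sup>2))"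
    unfolding mmul_def by (intro sum_mono Cauchy_Schwarz_ineq_sum)
  also have "\<dots> = (\<Sum>i<m. \<Sum>t<l. (X i t)\<^sup>2) * (\<Sum>j<k. \<Sum>t<l. (Y t j)\<^sup>2)"
    by (rule sum_product[symmetric])
  also have "\<dots> = (\<Sum>i<m. \<Sum>t<l. (X i t)\<^sup>2) * (\<Sum>t<l. \<Sum>j<k. (Y t j)\<^sup>2)"
    by (subst sum.swap) rule
  finally show ?thesis unfolding frob_def by (simp add: real_sqrt_mult[symmetric])
qed

lemma frob_mmul3_abs:
  "frob m k (mmul l2 (mmul l1 (mabs X) (mabs Y)) (mabs Z)) \<le> frob m l1 X * frob l1 l2 Y * frob l2 k Z"
proof -
  have "frob m k (mmul l2 (mmul l1 (mabs X) (mabs Y)) (mabs Z))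
      \<le> frob m l2 (mmul l1 (mabs X) (mabs Y)) * frob l2 k (mabs Z)"
    by (rule frob_mmul)
  also have "\<dots> \<le> frob m l1 (mabs X) * frob l1 l2 (mabs Y) * frob l2 k (mabs Z)"
    by (intro mult_right_mono frob_mmul frob_nonneg)
  finally show ?thesis by simp
qed

lemma norm1_sandwich_hprod_le:
  assumes "0 < m" "0 < n"
  shows "norm1 m m (mmul n (mmul n (mabs A) (hprod P Q)) (mabs A'))
    \<le> norm1 m n A * (frob n n P * frob n n Q) * norm1 n m A'"
proof -
  have "norm1 m m (mmul n (mmul n (mabs A) (hprod P Q)) (mabs A'))
      \<le> norm1 m n (mmul n (mabs A) (hprod P Q)) * norm1 n m (mabs A')"
    by (rule norm1_mmul[OF assms(1,2)])
  also have "\<dots> \<le> (norm1 m n (mabs A) * norm1 n n (hprod P Q)) * norm1 n m (mabs A')"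
    using assms by (intro mult_right_mono norm1_mmul norm1_nonneg)
  also have "\<dots> \<le> norm1 m n A * (frob n n P * frob n n Q) * norm1 n m A'"
    using assms by (auto intro!: mult_right_mono mult_left_mono norm1_hprod norm1_nonneg)
  finally show ?thesis .
qed

lemma norm1_first_order_bound:
  assumes pos: "\<forall>e\<in>E. 0 < e" and k0: "0 < k"
    and entrywise: "\<exists>K e0. 0 < e0 \<and> (\<forall>e\<in>E. e \<le> e0 \<longrightarrow>
      (\<forall>i<m. \<forall>j<k. \<bar>D e i j\<bar> \<le> T i j * c * e + K * e\<^sup>2))"
    and T_nonneg: "\<And>i j. 0 \<le> T i j" and c0: "0 \<le> c" and T_norm: "norm1 m k T \<le> N"
  shows "\<exists>K e0. 0 < e0 \<and> (\<forall>e\<in>E. e \<le> e0 \<longrightarrow> norm1 m k (D e) \<le> N * c * e + K * e\<^sup>2)"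
proof -
  obtain K e0 where K: "0 < e0" "\<forall>e\<in>E. e \<le> e0 \<longrightarrow>
      (\<forall>i<m. \<forall>j<k. \<bar>D e i j\<bar> \<le> T i j * c * e + K * e\<^sup>2)"
    using entrywise by blast
  have "norm1 m k (D e) \<le> N * c * e + real m * K * e\<^sup>2" if e: "e \<in> E" "e \<le> e0" for e
  proof (rule norm1_leI[OF k0])
    fix j assume j: "j < k"
    have ce: "0 \<le> c * e" using c0 pos e by (simp add: less_imp_le)
    have "(\<Sum>i<m. \<bar>D e i j\<bar>) \<le> (\<Sum>i<m. \<bar>T i j\<bar> * (c * e) + K * e\<^sup>2)"
      using K e j T_nonneg by (intro sum_mono) (simp add: mult.assoc)
    also have "\<dots> = (\<Sum>i<m. \<bar>T i j\<bar>) * (c * e) + real m * K * e\<^sup>2"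
      by (simp add: sum.distrib sum_distrib_right)
    also have "\<dots> \<le> N * (c * e) + real m * K * e\<^sup>2"
      using ce j T_norm by (intro add_right_mono mult_right_mono order_trans[OF col_sum_le_norm1])
    finally show "(\<Sum>i<m. \<bar>D e i j\<bar>) \<le> N * c * e + real m * K * e\<^sup>2"
      by (simp add: mult.assoc)
  qed
  then show ?thesis using K(1) by blast
qed

section \<open>Toom-Cook matrices\<close>

lemma tcN_nonzero:
  assumes "inj_on p {..<n}" "i < n"
  shows "tcN n p i \<noteq> 0"
proof -
  have "p i - p j \<noteq> 0" if "j \<in> {..<n} - {i}" for j
    using assms that unfolding inj_on_def by fastforce
  then show ?thesis by (simp add: tcN_def)
qed

lemma tcM_leading_coeff:
  assumes "i < n"
  shows "tcM n p i (n - 1) = 1"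
proof -
  let ?f = "\<Prod>k\<in>{..<n} - {i}. [:- p k, 1:]"
  have "degree ?f = n - 1"
    using assms by (subst degree_prod_eq_sum_degree) auto
  moreover have "lead_coeff ?f = 1" by (simp add: lead_coeff_prod)
  ultimately show ?thesis by (simp add: tcM_def)
qed

lemma toom_cook_entrywise_error:
  assumes dims: "n = no + nh - 1" and pos: "\<forall>e\<in>E. 0 < e"
    and fl_model: "\<forall>e\<in>E. \<forall>y. \<bar>fl e y - y\<bar> \<le> e * \<bar>y\<bar> \<and> fl e y \<in> Fl e"
    and dot_float: "\<forall>e\<in>E. \<forall>m u y. dot e m u y \<in> Fl e"
    and H_float: "\<forall>e\<in>E. \<forall>i<nh. \<forall>j<nh. H i j \<in> Fl e"
    and X_float: "\<forall>e\<in>E. \<forall>i<n. \<forall>j<n. X i j \<in> Fl e"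
    and rows_A: "\<forall>i<no. accurate_dot E Fl fl dot n (tcAT p i) alpha"
    and rows_B: "\<forall>i<n. accurate_dot E Fl fl dot n (tcBT n p i) beta"
    and rows_G: "\<forall>i<n. accurate_dot E Fl fl dot nh (tcG n p i) gamma"
    and nonneg: "0 \<le> alpha" "0 \<le> beta" "0 \<le> gamma"
  shows "\<exists>K \<epsilon>0. 0 < \<epsilon>0 \<and> (\<forall>\<epsilon>\<in>E. \<epsilon> \<le> \<epsilon>0 \<longrightarrow> (\<forall>i<no. \<forall>j<no.
            \<bar>tc_computed (dot \<epsilon>) (fl \<epsilon>) no nh p H X i j - tc_exact no nh p H X i j\<bar>
              \<le> mmul n (mmul n (mabs (tcAT p))
                    (hprod (mmul nh (mmul nh (mabs (tcG n p)) (mabs H)) (mabs (mtransp (tcG n p))))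
                           (mmul n (mmul n (mabs (tcBT n p)) (mabs X)) (mabs (mtransp (tcBT n p))))))
                  (mabs (mtransp (tcAT p))) i j
                 * (2 * alpha + 2 * beta + 2 * gamma + 1) * \<epsilon> + K * \<epsilon>\<^sup>2))"
proof -
  define T where "T = mmul n (mmul n (mabs (tcAT p))
                    (hprod (mmul nh (mmul nh (mabs (tcG n p)) (mabs H)) (mabs (mtransp (tcG n p))))
                           (mmul n (mmul n (mabs (tcBT n p)) (mabs X)) (mabs (mtransp (tcBT n p))))))
                  (mabs (mtransp (tcAT p)))"
  define c where "c = 2 * alpha + 2 * beta + 2 * gamma + 1"
  have "\<forall>i<no. \<forall>j<no. first_order_bound E
      (\<lambda>e. \<bar>tc_computed (dot e) (fl e) no nh p H X i j - tc_exact no nh p H X i j\<bar>) (T i j * c)"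
    using bilinear_algorithm_error[OF pos fl_model dot_float H_float X_float rows_A rows_B rows_G nonneg]
    unfolding tc_computed_def tc_exact_def Let_def dims[symmetric] T_def c_def
    by (auto simp: mult.commute)
  then show ?thesis unfolding T_def c_def by (rule first_order_bound_entrywise)
qed

lemma toom_cook_majorant_norm1_le:
  assumes "0 < no" "0 < n"
  shows "norm1 no no (mmul n (mmul n (mabs AT)
            (hprod (mmul nh (mmul nh (mabs G) (mabs H)) (mabs G'))
                   (mmul n (mmul n (mabs BT) (mabs X)) (mabs B)))) (mabs A))
    \<le> norm1 no n AT * frob n nh G * frob nh nh H * frob nh n G'
       * frob n n BT * frob n n X * frob n n B * norm1 n no A"
proof -
  have frob_bound: "frob n n (mmul nh (mmul nh (mabs G) (mabs H)) (mabs G'))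
      * frob n n (mmul n (mmul n (mabs BT) (mabs X)) (mabs B))
      \<le> (frob n nh G * frob nh nh H * frob nh n G') * (frob n n BT * frob n n X * frob n n B)"
    by (intro mult_mono frob_mmul3_abs mult_nonneg_nonneg frob_nonneg)
  have "norm1 no no (mmul n (mmul n (mabs AT)
            (hprod (mmul nh (mmul nh (mabs G) (mabs H)) (mabs G'))
                   (mmul n (mmul n (mabs BT) (mabs X)) (mabs B)))) (mabs A))
      \<le> norm1 no n AT * (frob n n (mmul nh (mmul nh (mabs G) (mabs H)) (mabs G'))
        * frob n n (mmul n (mmul n (mabs BT) (mabs X)) (mabs B))) * norm1 n no A"
    by (rule norm1_sandwich_hprod_le[OF assms])
  also have "\<dots> \<le> norm1 no n AT * ((frob n nh G * frob nh nh H * frob nh n G')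
      * (frob n n BT * frob n n X * frob n n B)) * norm1 n no A"
    using assms frob_bound by (intro mult_right_mono mult_left_mono norm1_nonneg)
  finally show ?thesis by (simp add: mult_ac)
qed

theorem mainTheorem3:
  fixes no nh n :: nat
    and p :: "nat \<Rightarrow> real"
    and E :: "real set"
    and Fl :: "real \<Rightarrow> real set"
    and fl :: "real \<Rightarrow> real \<Rightarrow> real"
    and dot :: "real \<Rightarrow> nat \<Rightarrow> (nat \<Rightarrow> real) \<Rightarrow> (nat \<Rightarrow> real) \<Rightarrow> real"
    and alpha beta gamma :: real
    and H X :: "nat \<Rightarrow> nat \<Rightarrow> real"
  assumes dims: "1 \<le> no" "1 \<le> nh" "n = no + nh - 1"
    and distinct: "inj_on p {..<n}"
    and eps_pos: "\<forall>\<epsilon>\<in>E. 0 < \<epsilon>"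
    and fl_model: "\<forall>\<epsilon>\<in>E. \<forall>y. \<bar>fl \<epsilon> y - y\<bar> \<le> \<epsilon> * \<bar>y\<bar> \<and> fl \<epsilon> y \<in> Fl \<epsilon>"
    and dot_float: "\<forall>\<epsilon>\<in>E. \<forall>m u y. dot \<epsilon> m u y \<in> Fl \<epsilon>"
    and H_float: "\<forall>\<epsilon>\<in>E. \<forall>i<nh. \<forall>j<nh. H i j \<in> Fl \<epsilon>"
    and X_float: "\<forall>\<epsilon>\<in>E. \<forall>i<n. \<forall>j<n. X i j \<in> Fl \<epsilon>"
    and alpha_def: "\<exists>K \<epsilon>0. 0 < \<epsilon>0 \<and> (\<forall>\<epsilon>\<in>E. \<epsilon> \<le> \<epsilon>0 \<longrightarrow>
        (\<forall>i<no. \<forall>y. (\<forall>k<n. y k \<in> Fl \<epsilon>) \<longrightarrow>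
          \<bar>(\<Sum>k<n. tcAT p i k * y k) - dot \<epsilon> n (\<lambda>k. fl \<epsilon> (tcAT p i k)) y\<bar>
            \<le> (\<Sum>k<n. \<bar>tcAT p i k\<bar> * \<bar>y k\<bar>) * (alpha * \<epsilon> + K * \<epsilon>\<^sup>2)))"
    and beta_def: "\<exists>K \<epsilon>0. 0 < \<epsilon>0 \<and> (\<forall>\<epsilon>\<in>E. \<epsilon> \<le> \<epsilon>0 \<longrightarrow>
        (\<forall>i<n. \<forall>y. (\<forall>k<n. y k \<in> Fl \<epsilon>) \<longrightarrow>
          \<bar>(\<Sum>k<n. tcBT n p i k * y k) - dot \<epsilon> n (\<lambda>k. fl \<epsilon> (tcBT n p i k)) y\<bar>
            \<le> (\<Sum>k<n. \<bar>tcBT n p i k\<bar> * \<bar>y k\<bar>) * (beta * \<epsilon> + K * \<epsilon>\<^sup>2)))"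
    and gamma_def: "\<exists>K \<epsilon>0. 0 < \<epsilon>0 \<and> (\<forall>\<epsilon>\<in>E. \<epsilon> \<le> \<epsilon>0 \<longrightarrow>
        (\<forall>i<n. \<forall>y. (\<forall>k<nh. y k \<in> Fl \<epsilon>) \<longrightarrow>
          \<bar>(\<Sum>k<nh. tcG n p i k * y k) - dot \<epsilon> nh (\<lambda>k. fl \<epsilon> (tcG n p i k)) y\<bar>
            \<le> (\<Sum>k<nh. \<bar>tcG n p i k\<bar> * \<bar>y k\<bar>) * (gamma * \<epsilon> + K * \<epsilon>\<^sup>2)))"
  shows "(\<exists>K \<epsilon>0. 0 < \<epsilon>0 \<and> (\<forall>\<epsilon>\<in>E. \<epsilon> \<le> \<epsilon>0 \<longrightarrow> (\<forall>i<no. \<forall>j<no.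
            \<bar>tc_computed (dot \<epsilon>) (fl \<epsilon>) no nh p H X i j - tc_exact no nh p H X i j\<bar>
              \<le> mmul n (mmul n (mabs (tcAT p))
                    (hprod (mmul nh (mmul nh (mabs (tcG n p)) (mabs H)) (mabs (mtransp (tcG n p))))
                           (mmul n (mmul n (mabs (tcBT n p)) (mabs X)) (mabs (mtransp (tcBT n p))))))
                  (mabs (mtransp (tcAT p))) i j
                 * (2 * alpha + 2 * beta + 2 * gamma + 1) * \<epsilon> + K * \<epsilon>\<^sup>2)))
       \<and> (\<exists>K \<epsilon>0. 0 < \<epsilon>0 \<and> (\<forall>\<epsilon>\<in>E. \<epsilon> \<le> \<epsilon>0 \<longrightarrow>
            norm1 no no (\<lambda>i j. tc_computed (dot \<epsilon>) (fl \<epsilon>) no nh p H X i j - tc_exact no nh p H X i j)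
              \<le> norm1 no n (tcAT p) * frob n nh (tcG n p) * frob nh nh H * frob nh n (mtransp (tcG n p))
                 * frob n n (tcBT n p) * frob n n X * frob n n (mtransp (tcBT n p)) * norm1 n no (mtransp (tcAT p))
                 * (2 * alpha + 2 * beta + 2 * gamma + 1) * \<epsilon> + K * \<epsilon>\<^sup>2))"
proof -
  have no0: "0 < no" and n0: "0 < n" using dims by auto
  txt \<open>If E stays away from 0 both claims hold vacuously; otherwise \<alpha>, \<beta>, \<gamma> \<ge> 0.\<close>
  consider (isolated) e0 where "0 < e0" "\<forall>e\<in>E. \<not> e \<le> e0" | (accumulating) "\<forall>d>0. \<exists>e\<in>E. e \<le> d"
    by blast
  then show ?thesis
  proof cases
    case isolated
    then show ?thesis by blast
  next
    case accumulating
    have fl_one: "\<forall>e\<in>E. \<bar>fl e 1 - 1\<bar> \<le> e \<and> fl e 1 \<in> Fl e" by (metis fl_model abs_one mult.right_neutral)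
    note rows_A = accurate_dot_rows[where C="tcAT p" and dot=dot and fl=fl and m=n, OF alpha_def]
      and rows_B = accurate_dot_rows[where C="tcBT n p" and dot=dot and fl=fl and m=n, OF beta_def]
      and rows_G = accurate_dot_rows[where C="tcG n p" and dot=dot and fl=fl and m=nh, OF gamma_def]
    note coeff_nonneg = accurate_dot_nonneg[where fl=fl and Fl=Fl, OF accumulating eps_pos fl_one]
    have alpha: "0 \<le> alpha"
      by (rule coeff_nonneg[OF rows_A[rule_format, OF no0], of 0]) (use n0 in \<open>simp_all add: tcAT_def\<close>)
    have beta: "0 \<le> beta"
      by (rule coeff_nonneg[OF rows_B[rule_format, of "n - 1"], of 0])
        (use n0 tcM_leading_coeff[of 0 n p] in \<open>simp_all add: tcBT_def\<close>)
    have gamma: "0 \<le> gamma"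
      by (rule coeff_nonneg[OF rows_G[rule_format, OF n0], of 0])
        (use dims tcN_nonzero[OF distinct n0] in \<open>simp_all add: tcG_def\<close>)
    note entrywise = toom_cook_entrywise_error[OF dims(3) eps_pos fl_model dot_float H_float X_float
        rows_A rows_B rows_G alpha beta gamma]
    show ?thesis
      using alpha beta gamma
      by (intro conjI entrywise norm1_first_order_bound[OF eps_pos no0 entrywise]
          toom_cook_majorant_norm1_le no0 n0 mmul_nonneg)
        (auto simp: mabs_def hprod_def intro!: mult_nonneg_nonneg mmul_nonneg)
  qed
qed

end
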